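(* Let $L$ be a finite multiset of positive integers. If $L$ admits a special linear realization of type $1$, then for every positive integer $b$ the multiset $L\cup\{2^b\}$ also admits a special linear realization of type $1$.
   Context: For a multiset $L$ of positive integers with $|L|=v-1$, each at most $v-1$, a linear realization of $L$ is a Hamiltonian path $[x_0,x_1,\dots,x_{v-1}]$ of the complete graph on $\{0,1,\dots,v-1\}$ such that the multiset $\{|x_i-x_{i+1}| : i=0,\dots,v-2\}$ equals $L$. A linear realization of $L$ is special of type $1$ if the vertices $|L|$ and $|L|-1$ are adjacent (consecutive) in the path. $\{2^b\}$ denotes the multiset of $b$ copies of $2$, and $\cup$ is multiset union. *)

theory Defs
  imports Main "HOL-Library.Multiset"
begin

definition path_diffs :: "nat list \<Rightarrow> nat multiset" where
  "path_diffs xs = mset (map (\<lambda>i. nat \<bar>int (xs ! i) - int (xs ! Suc i)\<bar>) [0..<length xs - 1])"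

text \<open>A linear realization of L: a Hamiltonian path [x_0,...,x_{v-1}] of K_v on {0..v-1},
  where v = |L| + 1, whose multiset of edge lengths equals L.\<close>
definition linear_realization :: "nat multiset \<Rightarrow> nat list \<Rightarrow> bool" where
  "linear_realization L xs \<longleftrightarrow>
     length xs = size L + 1 \<and> distinct xs \<and> set xs = {0..<size L + 1} \<and> path_diffs xs = L"

definition special_type1 :: "nat multiset \<Rightarrow> nat list \<Rightarrow> bool" where
  "special_type1 L xs \<longleftrightarrow> linear_realization L xs \<and>
     (\<exists>i. Suc i < length xs \<and>
        {xs ! i, xs ! Suc i} = {size L, size L - 1})"

end

theory Submission
  imports Defs
begin

text \<open>Let the path realize L and pass through the edge between v - 1 and v, where v = |L|.
  Inserting the new vertex v + 1 inside that edge replaces its length 1 by the two lengths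
  1 and 2, so the new path realizes L plus one copy of 2, and it is again special of type 1
  because v + 1 is adjacent to v. Iterating adds any number of 2s.\<close>

definition edge_length :: "nat \<Rightarrow> nat \<Rightarrow> nat" where
  "edge_length x y = nat \<bar>int x - int y\<bar>"

lemma path_diffs_Nil [simp]: "path_diffs [] = {#}"
  and path_diffs_singleton [simp]: "path_diffs [x] = {#}"
  by (simp_all add: path_diffs_def)

lemma path_diffs_Cons_Cons [simp]:
  "path_diffs (x # y # zs) = add_mset (edge_length x y) (path_diffs (y # zs))"
proof -
  have "[0..<length (x # y # zs) - 1] = 0 # map Suc [0..<length (y # zs) - 1]"
    by (simp add: upt_conv_Cons map_Suc_upt del: upt_Suc)
  then show ?thesis by (simp add: path_diffs_def edge_length_def comp_def)
qed

lemma path_diffs_append_Cons: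
  "path_diffs (as @ x # ws) = path_diffs (as @ [x]) + path_diffs (x # ws)"
proof (induction as)
  case (Cons a as)
  then show ?case by (cases as) auto
qed simp

lemma path_diffs_insert_vertex:
  "path_diffs (as @ x # z # y # cs) + {#edge_length x y#}
     = path_diffs (as @ x # y # cs) + {#edge_length x z, edge_length z y#}"
  using path_diffs_append_Cons[of as x "z # y # cs"] path_diffs_append_Cons[of as x "y # cs"]
  by simp

lemma linear_realization_insert_top:
  assumes lr: "linear_realization L (as @ x # y # cs)"
    and xy: "{x, y} = {size L, size L - 1}"
  shows "linear_realization (add_mset 2 L) (as @ x # Suc (size L) # y # cs)"
    (is "linear_realization _ ?ys")
proof -
  let ?n = "size L"
  have dist: "distinct (as @ x # y # cs)" and set: "set (as @ x # y # cs) = {0..<?n + 1}"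
    and diffs: "path_diffs (as @ x # y # cs) = L"
    using lr by (auto simp: linear_realization_def)
  have "x \<noteq> y" using dist by simp
  then have "?n \<ge> 1" and "x = ?n \<and> y = ?n - 1 \<or> x = ?n - 1 \<and> y = ?n"
    using xy by (auto simp: doubleton_eq_iff)
  then have "edge_length x y = 1"
    and "{#edge_length x (Suc ?n), edge_length (Suc ?n) y#} = {#1, 2#}"
    by (elim disjE; simp add: edge_length_def add_mset_commute)+
  then have "path_diffs ?ys + {#1#} = L + {#1, 2#}"
    using path_diffs_insert_vertex[of as x "Suc ?n" y cs] diffs by simp
  then have diffs': "path_diffs ?ys = add_mset 2 L" by simp
  have "Suc ?n \<notin> set (as @ x # y # cs)"
    using set by simp
  then have dist': "distinct ?ys"
    using dist by simp
  have "set ?ys = insert (Suc ?n) {0..<Suc ?n}"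
    using set by auto
  then have set': "set ?ys = {0..<size (add_mset 2 L) + 1}"
    by (simp add: atLeastLessThanSuc)
  show ?thesis
    using lr diffs' dist' set' unfolding linear_realization_def by simp
qed

lemma special_type1_add_mset_2:
  assumes "special_type1 L xs"
  shows "\<exists>ys. special_type1 (add_mset 2 L) ys"
proof -
  let ?n = "size L"
  obtain i where i: "Suc i < length xs" "{xs ! i, xs ! Suc i} = {?n, ?n - 1}"
    using assms unfolding special_type1_def by auto
  define as where "as = take i xs"
  define cs where "cs = drop (Suc (Suc i)) xs"
  have xs: "xs = as @ xs ! i # xs ! Suc i # cs"
    unfolding as_def cs_def using i(1)
    by (metis Cons_nth_drop_Suc Suc_lessD append_take_drop_id)
  define ys where "ys = as @ xs ! i # Suc ?n # xs ! Suc i # cs"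
  have "linear_realization (add_mset 2 L) ys"
    unfolding ys_def
    using assms i(2) xs linear_realization_insert_top unfolding special_type1_def by metis
  moreover have "\<exists>j. Suc j < length ys \<and> {ys ! j, ys ! Suc j} = {Suc ?n, ?n}"
  proof (cases "xs ! i = ?n")
    case True
    then show ?thesis unfolding ys_def
      by (intro exI[of _ "length as"]) (auto simp: nth_append)
  next
    case False
    then have "xs ! Suc i = ?n" using i(2) by (auto simp: doubleton_eq_iff)
    then show ?thesis unfolding ys_def
      by (intro exI[of _ "Suc (length as)"]) (auto simp: nth_append insert_commute)
  qed
  ultimately show ?thesis unfolding special_type1_def by auto
qed

lemma special_type1_add_replicate_2:
  assumes "special_type1 L xs"
  shows "\<exists>ys. special_type1 (L + replicate_mset k 2) ys"
proof (induction k)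
  case 0
  then show ?case using assms by auto
next
  case (Suc k)
  then show ?case using special_type1_add_mset_2 by fastforce
qed

theorem lemma2p2:
  fixes L :: "nat multiset" and b :: nat
  assumes "\<forall>x\<in>#L. 0 < x"
    and "\<exists>xs. special_type1 L xs"
    and "0 < b"
  shows "\<exists>ys. special_type1 (L + replicate_mset b 2) ys"
  using assms(2) special_type1_add_replicate_2 by blast

end
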